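(* Let $X$ be a real Banach space and $T:X\rightrightarrows X^*$ a maximal monotone operator. If $D(T)$ is bounded, then $\mathrm{conv}\,R(T)$ is weak-$*$ dense in $X^*$.
   Context: An operator $T:X\rightrightarrows X^*$ is a subset of $X\times X^*$, with domain $D(T)=\{x\;|\;\exists x^*,(x,x^* )\in T\}$ and range $R(T)=\{x^*\;|\;\exists x,(x,x^* )\in T\}$. $T$ is monotone if $\langle x-y,x^*-y^*\rangle\geq0$ for all $(x,x^* ),(y,y^* )\in T$, and maximal monotone if it is monotone and not properly contained in another monotone operator. $\mathrm{conv}$ denotes convex hull. *)

theory Defs
  imports "HOL-Analysis.Analysis"
begin

text \<open>Operators T : X \<rightrightarrows> X* are subsets of X \<times> X*, where X* is the space of
bounded linear functionals on 'a.\<close>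

definition dom_op :: "('a::real_normed_vector \<times> ('a \<Rightarrow>\<^sub>L real)) set \<Rightarrow> 'a set" where
  "dom_op T = {x. \<exists>f. (x, f) \<in> T}"

definition ran_op :: "('a::real_normed_vector \<times> ('a \<Rightarrow>\<^sub>L real)) set \<Rightarrow> ('a \<Rightarrow>\<^sub>L real) set" where
  "ran_op T = {f. \<exists>x. (x, f) \<in> T}"

definition monotone_op :: "('a::real_normed_vector \<times> ('a \<Rightarrow>\<^sub>L real)) set \<Rightarrow> bool" where
  "monotone_op T \<longleftrightarrow>
     (\<forall>x f y g. (x, f) \<in> T \<longrightarrow> (y, g) \<in> T \<longrightarrow> blinfun_apply (f - g) (x - y) \<ge> 0)"

definition maximal_monotone_op :: "('a::real_normed_vector \<times> ('a \<Rightarrow>\<^sub>L real)) set \<Rightarrow> bool" where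
  "maximal_monotone_op T \<longleftrightarrow>
     monotone_op T \<and> (\<forall>S. monotone_op S \<longrightarrow> T \<subseteq> S \<longrightarrow> S = T)"

definition weak_star_topology :: "('a::real_normed_vector \<Rightarrow>\<^sub>L real) topology" where
  "weak_star_topology =
     topology_generated_by {{f. blinfun_apply f x \<in> U} | x U. open (U :: real set)}"

end

theory Submission
  imports Defs
begin

text \<open>
  Suppose some direction \<open>x\<^sub>0 \<noteq> 0\<close> had \<open>f x\<^sub>0 \<le> c\<close> for all \<open>f \<in> R(T)\<close>. Starting from a pair
  \<open>(y\<^sub>1, f\<^sub>1) \<in> T\<close>, the pair \<open>(y\<^sub>1 + t x\<^sub>0, f\<^sub>1 + l h)\<close> is monotonically related to all of \<open>T\<close>
  for a suitable functional \<open>h\<close> with \<open>h x\<^sub>0 > 0\<close> and every large \<open>t\<close>, because the bounded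
  domain keeps the error \<open>h (y\<^sub>1 - y)\<close> bounded. Maximality then puts \<open>y\<^sub>1 + t x\<^sub>0\<close> into the
  bounded set \<open>D(T)\<close>, which is absurd. So \<open>R(T)\<close> is unbounded above in every direction.

  A convex set \<open>C \<subseteq> X\<^sup>*\<close> with this property is weak-* dense: by induction over a finite
  independent set \<open>F\<close>, the image of \<open>{g \<in> C. g = f\<^sub>0 on F}\<close> under \<open>g \<mapsto> (g x, g y)\<close> is a
  convex subset of \<open>\<real>\<^sup>2\<close> unbounded in every direction, hence all of \<open>\<real>\<^sup>2\<close> by the separating
  hyperplane theorem, so elements of \<open>C\<close> interpolate \<open>f\<^sub>0\<close> on any finite set.
\<close>

lemma monotone_op_insert_shifted:
  fixes T :: "('a::real_normed_vector \<times> ('a \<Rightarrow>\<^sub>L real)) set"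
  assumes mono: "monotone_op T" and y1: "(y1, f1) \<in> T"
    and bnd: "\<And>f. f \<in> ran_op T \<Longrightarrow> blinfun_apply f x0 \<le> c"
    and t: "t \<ge> 0"
    and shift: "\<And>y. y \<in> dom_op T \<Longrightarrow>
      t * (c - blinfun_apply f1 x0) \<le> l * blinfun_apply h (y1 + t *\<^sub>R x0 - y)"
  shows "monotone_op (insert (y1 + t *\<^sub>R x0, f1 + l *\<^sub>R h) T)"
proof -
  have new_pair: "0 \<le> blinfun_apply (f1 + l *\<^sub>R h - f) (y1 + t *\<^sub>R x0 - y)"
    if yf: "(y, f) \<in> T" for y f
  proof -
    have "0 \<le> blinfun_apply (f1 - f) (y1 - y)"
      using mono y1 yf unfolding monotone_op_def by blast
    moreover have "t * blinfun_apply f x0 \<le> t * c"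
      using bnd[of f] yf t unfolding ran_op_def by (auto intro: mult_left_mono)
    moreover have "t * (c - blinfun_apply f1 x0) \<le> l * blinfun_apply h (y1 + t *\<^sub>R x0 - y)"
      using shift[of y] yf unfolding dom_op_def by blast
    moreover have "blinfun_apply (f1 + l *\<^sub>R h - f) (y1 + t *\<^sub>R x0 - y)
        = blinfun_apply (f1 - f) (y1 - y) + t * blinfun_apply f1 x0 - t * blinfun_apply f x0
          + l * blinfun_apply h (y1 + t *\<^sub>R x0 - y)"
      by (simp add: blinfun.bilinear_simps algebra_simps)
    ultimately show ?thesis
      by (simp add: algebra_simps)
  qed
  have "blinfun_apply (f - (f1 + l *\<^sub>R h)) (y - (y1 + t *\<^sub>R x0))
      = blinfun_apply (f1 + l *\<^sub>R h - f) (y1 + t *\<^sub>R x0 - y)" for y f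
    by (simp add: blinfun.bilinear_simps algebra_simps)
  with mono new_pair show ?thesis
    unfolding monotone_op_def by auto
qed

lemma monotone_op_extends_far_along:
  fixes T :: "('a::real_normed_vector \<times> ('a \<Rightarrow>\<^sub>L real)) set"
  assumes mono: "monotone_op T" and y1: "(y1, f1) \<in> T"
    and M: "\<And>y. y \<in> dom_op T \<Longrightarrow> norm y \<le> M"
    and bnd: "\<And>f. f \<in> ran_op T \<Longrightarrow> blinfun_apply f x0 \<le> c"
  shows "\<exists>t\<ge>R. \<exists>g. monotone_op (insert (y1 + t *\<^sub>R x0, g) T)"
proof (cases "\<exists>f2\<in>ran_op T. blinfun_apply f2 x0 > blinfun_apply f1 x0")
  case False
  \<comment> \<open>\<open>f\<^sub>1\<close> maximises \<open>f x\<^sub>0\<close> over \<open>R(T)\<close>, so \<open>(y\<^sub>1 + t x\<^sub>0, f\<^sub>1)\<close> itself is related to \<open>T\<close>\<close>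
  then have "monotone_op (insert (y1 + max R 0 *\<^sub>R x0, f1 + 0 *\<^sub>R 0) T)"
    by (intro monotone_op_insert_shifted[OF mono y1, where c = "blinfun_apply f1 x0"]) auto
  then show ?thesis
    by (intro exI[of _ "max R 0"]) auto
next
  case True
  then obtain f2 where f2: "f2 \<in> ran_op T" "blinfun_apply f2 x0 > blinfun_apply f1 x0"
    by blast
  define h where "h = f2 - f1"
  define eta where "eta = blinfun_apply h x0"
  define d where "d = c - blinfun_apply f1 x0"
  define l where "l = 2 * d / eta"
  define t where "t = max (max R 0) (4 * norm h * M / eta)"
  have y1_dom: "y1 \<in> dom_op T" and f1_ran: "f1 \<in> ran_op T"
    using y1 unfolding dom_op_def ran_op_def by blast+
  have eta: "eta > 0"
    unfolding eta_def h_def using f2 by (simp add: blinfun.bilinear_simps)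
  have d: "d \<ge> 0"
    unfolding d_def using bnd[OF f1_ran] by simp
  have t: "t \<ge> 0" "t \<ge> R"
    unfolding t_def by auto
  have "t * eta \<ge> 4 * norm h * M"
    using eta mult_right_mono[of "4 * norm h * M / eta" t eta] unfolding t_def by simp
  have "t * d \<le> l * blinfun_apply h (y1 + t *\<^sub>R x0 - y)" if y: "y \<in> dom_op T" for y
  proof -
    \<comment> \<open>the bounded domain keeps \<open>h (y\<^sub>1 - y)\<close> within \<open>2 \<parallel>h\<parallel> M \<le> t \<eta> / 2\<close>\<close>
    have "\<bar>blinfun_apply h (y1 - y)\<bar> \<le> norm h * norm (y1 - y)"
      using norm_blinfun[of h "y1 - y"] by simp
    also have "\<dots> \<le> norm h * (2 * M)"
      using M[OF y] M[OF y1_dom] norm_triangle_ineq4[of y1 y] by (intro mult_left_mono) auto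
    finally have "blinfun_apply h (y1 + t *\<^sub>R x0 - y) \<ge> t * eta / 2"
      using \<open>t * eta \<ge> 4 * norm h * M\<close>
      by (simp add: eta_def blinfun.bilinear_simps algebra_simps)
    then have "l * (t * eta / 2) \<le> l * blinfun_apply h (y1 + t *\<^sub>R x0 - y)"
      using d eta unfolding l_def by (intro mult_left_mono) auto
    moreover have "l * (t * eta / 2) = t * d"
      unfolding l_def using eta by (simp add: field_simps)
    ultimately show ?thesis
      by linarith
  qed
  then have "monotone_op (insert (y1 + t *\<^sub>R x0, f1 + l *\<^sub>R h) T)"
    using monotone_op_insert_shifted[OF mono y1 bnd t(1)] unfolding d_def by blast
  with t(2) show ?thesis
    by blast
qed

lemma maximal_monotone_op_nonempty:
  assumes "maximal_monotone_op T"
  shows "T \<noteq> {}"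
proof
  assume "T = {}"
  moreover have "monotone_op {(0, 0)}"
    unfolding monotone_op_def by auto
  ultimately show False
    using assms unfolding maximal_monotone_op_def by blast
qed

lemma maximal_monotone_op_range_unbounded:
  fixes T :: "('a::real_normed_vector \<times> ('a \<Rightarrow>\<^sub>L real)) set"
  assumes max: "maximal_monotone_op T" and bounded: "bounded (dom_op T)" and "x0 \<noteq> 0"
  shows "\<exists>f\<in>ran_op T. blinfun_apply f x0 > c"
proof (rule ccontr)
  assume "\<not> ?thesis"
  then have bnd: "\<And>f. f \<in> ran_op T \<Longrightarrow> blinfun_apply f x0 \<le> c"
    by auto
  obtain y1 f1 where y1: "(y1, f1) \<in> T"
    using maximal_monotone_op_nonempty[OF max] by auto
  obtain M where M: "\<And>y. y \<in> dom_op T \<Longrightarrow> norm y \<le> M"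
    using bounded unfolding bounded_iff by blast
  have mono: "monotone_op T"
    using max unfolding maximal_monotone_op_def by blast
  obtain t g where t: "t \<ge> (2 * M + 1) / norm x0"
    and "monotone_op (insert (y1 + t *\<^sub>R x0, g) T)"
    using monotone_op_extends_far_along[OF mono y1 M bnd] by blast
  then have "insert (y1 + t *\<^sub>R x0, g) T = T"
    using max unfolding maximal_monotone_op_def by blast
  then have "y1 + t *\<^sub>R x0 \<in> dom_op T" "y1 \<in> dom_op T"
    using y1 unfolding dom_op_def by blast+
  then have "norm (y1 + t *\<^sub>R x0) \<le> M" "norm y1 \<le> M"
    using M by blast+
  moreover have "norm (t *\<^sub>R x0) \<le> norm (y1 + t *\<^sub>R x0) + norm y1"
    using norm_triangle_ineq4[of "y1 + t *\<^sub>R x0" y1] by simp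
  moreover have "norm (t *\<^sub>R x0) \<ge> t * norm x0"
    by (simp add: mult_right_mono)
  moreover have "t * norm x0 \<ge> 2 * M + 1"
    using t \<open>x0 \<noteq> 0\<close> by (simp add: field_simps)
  ultimately show False
    by linarith
qed

lemma convex_unbounded_directions_eq_UNIV:
  fixes S :: "'e::euclidean_space set"
  assumes "convex S" and unb: "\<And>a B. a \<noteq> 0 \<Longrightarrow> \<exists>v\<in>S. inner a v > B"
  shows "S = UNIV"
proof (rule ccontr)
  assume "S \<noteq> UNIV"
  then obtain p where p: "p \<notin> S"
    by auto
  have "convex ((+) (- p) ` S)" "0 \<notin> (+) (- p) ` S"
    using assms(1) p by (auto intro: convex_translation)
  then obtain a where a: "a \<noteq> 0" "\<forall>x\<in>(+) (- p) ` S. 0 \<le> inner a x"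
    using separating_hyperplane_set_0 by blast
  obtain v where v: "v \<in> S" "inner (- a) v > - inner a p"
    using unb[of "- a" "- inner a p"] a(1) by auto
  then have "0 \<le> inner a (- p + v)"
    using a(2) by auto
  with v(2) show False
    by (simp add: inner_add_right inner_diff_right)
qed

lemma notin_span_combination:
  fixes x y :: "'a::real_vector"
  assumes x: "x \<notin> span F" and y: "y \<notin> span (insert x F)" and a: "(a1, a2) \<noteq> (0, 0)"
  shows "a1 *\<^sub>R x + a2 *\<^sub>R y \<notin> span F"
proof
  assume comb: "a1 *\<^sub>R x + a2 *\<^sub>R y \<in> span F"
  show False
  proof (cases "a2 = 0")
    case True
    with a comb have "x \<in> span F"
      using span_mul[of "a1 *\<^sub>R x" F "1 / a1"] by simp
    with x show False ..
  next
    case False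
    have "a1 *\<^sub>R x + a2 *\<^sub>R y - a1 *\<^sub>R x \<in> span (insert x F)"
      using comb span_mono[of F "insert x F"] by (intro span_diff span_mul) (auto intro: span_base)
    with False have "y \<in> span (insert x F)"
      using span_mul[of "a2 *\<^sub>R y" "insert x F" "1 / a2"] by simp
    with y show False ..
  qed
qed

lemma convex_functionals_agreeing:
  "convex {g \<in> C. \<forall>b\<in>F. blinfun_apply g b = blinfun_apply f0 b}" if "convex C"
proof -
  have "{g \<in> C. \<forall>b\<in>F. blinfun_apply g b = blinfun_apply f0 b}
      = C \<inter> (\<Inter>b\<in>F. (\<lambda>g. blinfun_apply g b) -` {blinfun_apply f0 b})"
    by auto
  then show ?thesis
    using that by (auto intro!: convex_Int convex_INT convex_linear_vimage bounded_linear.linear)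
qed

lemma convex_unbounded_functionals_evaluation_eq_UNIV:
  fixes C :: "('a::real_normed_vector \<Rightarrow>\<^sub>L real) set"
  assumes conv: "convex C" and unb: "\<And>y B. y \<noteq> 0 \<Longrightarrow> \<exists>g\<in>C. blinfun_apply g y > B"
    and "y \<noteq> 0"
  shows "(\<lambda>g. blinfun_apply g y) ` C = UNIV"
proof (rule convex_unbounded_directions_eq_UNIV)
  have "linear (\<lambda>g::'a \<Rightarrow>\<^sub>L real. blinfun_apply g y)"
    by (simp add: bounded_linear.linear)
  with conv show "convex ((\<lambda>g. blinfun_apply g y) ` C)"
    by (rule convex_linear_image[rotated])
  show "\<exists>w\<in>(\<lambda>g. blinfun_apply g y) ` C. inner a w > B" if "a \<noteq> 0" for a B
    using unb[of "a *\<^sub>R y" B] that \<open>y \<noteq> 0\<close> by (auto simp: blinfun.scaleR_right)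
qed

lemma convex_unbounded_functionals_interpolate:
  fixes C :: "('a::real_normed_vector \<Rightarrow>\<^sub>L real) set"
  assumes conv: "convex C" and unb: "\<And>y B. y \<noteq> 0 \<Longrightarrow> \<exists>g\<in>C. blinfun_apply g y > B"
    and "finite F" "independent F" "y \<notin> span F"
  shows "\<exists>g\<in>C. (\<forall>b\<in>F. blinfun_apply g b = blinfun_apply f0 b) \<and> blinfun_apply g y = v"
  using \<open>finite F\<close> \<open>independent F\<close> \<open>y \<notin> span F\<close>
proof (induction F arbitrary: y v rule: finite_induct)
  case empty
  then have "y \<noteq> 0"
    by auto
  with conv unb have "(\<lambda>g. blinfun_apply g y) ` C = UNIV"
    by (rule convex_unbounded_functionals_evaluation_eq_UNIV)
  then have "v \<in> (\<lambda>g. blinfun_apply g y) ` C"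
    by simp
  then show ?case
    by auto
next
  case (insert x F)
  have indep: "independent F" and x: "x \<notin> span F"
    using insert.prems(1) insert.hyps(2) by (auto simp: independent_insert)
  define C\<^sub>F where "C\<^sub>F = {g \<in> C. \<forall>b\<in>F. blinfun_apply g b = blinfun_apply f0 b}"
  have "linear (\<lambda>g::'a \<Rightarrow>\<^sub>L real. (blinfun_apply g x, blinfun_apply g y))"
    by (intro bounded_linear.linear bounded_linear_Pair) simp_all
  have "(\<lambda>g. (blinfun_apply g x, blinfun_apply g y)) ` C\<^sub>F = UNIV"
  proof (rule convex_unbounded_directions_eq_UNIV)
    show "convex ((\<lambda>g. (blinfun_apply g x, blinfun_apply g y)) ` C\<^sub>F)"
      using convex_functionals_agreeing[OF conv] \<open>linear _\<close> unfolding C\<^sub>F_def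
      by (rule convex_linear_image[rotated])
    show "\<exists>w\<in>(\<lambda>g. (blinfun_apply g x, blinfun_apply g y)) ` C\<^sub>F. inner a w > B"
      if "a \<noteq> 0" for a B
    proof -
      obtain a1 a2 where a: "a = (a1, a2)"
        by (cases a)
      have "a1 *\<^sub>R x + a2 *\<^sub>R y \<notin> span F"
        using notin_span_combination[OF x insert.prems(2)] that a by (simp add: zero_prod_def)
      then obtain g where "g \<in> C\<^sub>F" "blinfun_apply g (a1 *\<^sub>R x + a2 *\<^sub>R y) = B + 1"
        using insert.IH[OF indep, of _ "B + 1"] unfolding C\<^sub>F_def by blast
      then show ?thesis
        unfolding a by (intro bexI[of _ "(blinfun_apply g x, blinfun_apply g y)"])
          (auto simp: blinfun.bilinear_simps)
    qed
  qed
  then have "(blinfun_apply f0 x, v) \<in> (\<lambda>g. (blinfun_apply g x, blinfun_apply g y)) ` C\<^sub>F"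
    by simp
  then obtain g where "g \<in> C\<^sub>F" "blinfun_apply g x = blinfun_apply f0 x" "blinfun_apply g y = v"
    by force
  then show ?case
    unfolding C\<^sub>F_def by auto
qed

lemma convex_unbounded_functionals_interpolate_finite:
  fixes C :: "('a::real_normed_vector \<Rightarrow>\<^sub>L real) set"
  assumes conv: "convex C" and "C \<noteq> {}"
    and unb: "\<And>y B. y \<noteq> 0 \<Longrightarrow> \<exists>g\<in>C. blinfun_apply g y > B"
    and "finite A"
  shows "\<exists>g\<in>C. \<forall>a\<in>A. blinfun_apply g a = blinfun_apply f0 a"
proof -
  obtain B where B: "B \<subseteq> A" "independent B" "A \<subseteq> span B"
    using maximal_independent_subset by blast
  have "\<exists>g\<in>C. \<forall>b\<in>B. blinfun_apply g b = blinfun_apply f0 b"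
  proof (cases "B = {}")
    case True
    then show ?thesis
      using \<open>C \<noteq> {}\<close> by auto
  next
    case False
    then obtain x F where "B = insert x F" "x \<notin> F"
      by (meson Set.set_insert ex_in_conv)
    moreover have "finite F"
      using B(1) \<open>finite A\<close> \<open>B = insert x F\<close> finite_subset by auto
    ultimately show ?thesis
      using convex_unbounded_functionals_interpolate[OF conv unb, of F x f0 "blinfun_apply f0 x"] B(2)
      by (auto simp: independent_insert)
  qed
  with B(3) show ?thesis
    using linear_eq_on_span[of "blinfun_apply _" "blinfun_apply f0"]
    by (meson bounded_linear.linear blinfun.bounded_linear_right subsetD)
qed

lemma topspace_weak_star_topology: "topspace weak_star_topology = UNIV"
proof -
  have "UNIV \<in> {{f. blinfun_apply f x \<in> U} | x U. open (U :: real set)}"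
    by blast
  then show ?thesis
    unfolding weak_star_topology_def topology_generated_by_topspace by blast
qed

lemma openin_weak_star_topology_cylinder:
  assumes "openin weak_star_topology W" and "f0 \<in> W"
  shows "\<exists>A e. finite A \<and> e > 0 \<and> {f. \<forall>a\<in>A. \<bar>blinfun_apply f a - blinfun_apply f0 a\<bar> < e} \<subseteq> W"
proof -
  have "generate_topology_on {{f. blinfun_apply f x \<in> U} | x U. open (U :: real set)} W"
    using assms(1) unfolding weak_star_topology_def openin_topology_generated_by_iff .
  then show ?thesis
    using assms(2)
  proof (induction arbitrary: f0 rule: generate_topology_on.induct)
    case Empty
    then show ?case by simp
  next
    case (Int a b)
    obtain A1 e1 where "finite A1" "e1 > 0"
      and 1: "{f. \<forall>a\<in>A1. \<bar>blinfun_apply f a - blinfun_apply f0 a\<bar> < e1} \<subseteq> a"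
      using Int.IH(1) Int.prems by blast
    obtain A2 e2 where "finite A2" "e2 > 0"
      and 2: "{f. \<forall>a\<in>A2. \<bar>blinfun_apply f a - blinfun_apply f0 a\<bar> < e2} \<subseteq> b"
      using Int.IH(2) Int.prems by blast
    have "{f. \<forall>a\<in>A1 \<union> A2. \<bar>blinfun_apply f a - blinfun_apply f0 a\<bar> < min e1 e2} \<subseteq> a \<inter> b"
    proof
      fix f
      assume "f \<in> {f. \<forall>a\<in>A1 \<union> A2. \<bar>blinfun_apply f a - blinfun_apply f0 a\<bar> < min e1 e2}"
      then have "f \<in> {f. \<forall>a\<in>A1. \<bar>blinfun_apply f a - blinfun_apply f0 a\<bar> < e1}"
        and "f \<in> {f. \<forall>a\<in>A2. \<bar>blinfun_apply f a - blinfun_apply f0 a\<bar> < e2}"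
        by auto
      with 1 2 show "f \<in> a \<inter> b"
        by blast
    qed
    with \<open>finite A1\<close> \<open>finite A2\<close> \<open>e1 > 0\<close> \<open>e2 > 0\<close> show ?case
      by (intro exI[of _ "A1 \<union> A2"] exI[of _ "min e1 e2"]) auto
  next
    case (UN K)
    then obtain k where "k \<in> K" "f0 \<in> k"
      by blast
    then obtain A e where "finite A" "e > 0"
      and "{f. \<forall>a\<in>A. \<bar>blinfun_apply f a - blinfun_apply f0 a\<bar> < e} \<subseteq> k"
      using UN.IH by blast
    with \<open>k \<in> K\<close> show ?case
      by (meson Union_upper order_trans)
  next
    case (Basis s)
    then obtain x U where s: "s = {f. blinfun_apply f x \<in> U}" "open U"
      by blast
    then obtain e where "e > 0" "ball (blinfun_apply f0 x) e \<subseteq> U"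
      using Basis.prems openE by blast
    then show ?case
      unfolding s(1)
      by (intro exI[of _ "{x}"] exI[of _ e]) (auto simp: dist_real_def abs_minus_commute)
  qed
qed

lemma weak_star_dense_if_interpolating:
  assumes "\<And>A. finite A \<Longrightarrow> \<exists>g\<in>C. \<forall>a\<in>A. blinfun_apply g a = blinfun_apply f0 a"
  shows "f0 \<in> weak_star_topology closure_of C"
  unfolding in_closure_of topspace_weak_star_topology
proof (intro conjI allI impI UNIV_I)
  fix W
  assume "f0 \<in> W \<and> openin weak_star_topology W"
  then obtain A e where "finite A" "e > 0"
    and cylinder: "{f. \<forall>a\<in>A. \<bar>blinfun_apply f a - blinfun_apply f0 a\<bar> < e} \<subseteq> W"
    using openin_weak_star_topology_cylinder by blast
  obtain g where "g \<in> C" "\<forall>a\<in>A. blinfun_apply g a = blinfun_apply f0 a"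
    using assms \<open>finite A\<close> by blast
  with \<open>e > 0\<close> have "g \<in> {f. \<forall>a\<in>A. \<bar>blinfun_apply f a - blinfun_apply f0 a\<bar> < e}"
    by simp
  with cylinder \<open>g \<in> C\<close> show "\<exists>g. g \<in> C \<and> g \<in> W"
    by blast
qed

theorem corollary4p3:
  fixes T :: "('a::banach \<times> ('a \<Rightarrow>\<^sub>L real)) set"
  assumes "maximal_monotone_op T"
    and "bounded (dom_op T)"
  shows "weak_star_topology closure_of (convex hull (ran_op T)) = UNIV"
proof -
  let ?C = "convex hull (ran_op T)"
  have "ran_op T \<noteq> {}"
    using maximal_monotone_op_nonempty[OF assms(1)] unfolding ran_op_def by fast
  then have nonempty: "?C \<noteq> {}"
    by simp
  have unbounded: "\<exists>g\<in>?C. blinfun_apply g y > B" if "y \<noteq> 0" for y B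
    using maximal_monotone_op_range_unbounded[OF assms that] by (meson hull_inc)
  have "f0 \<in> weak_star_topology closure_of ?C" for f0
    by (rule weak_star_dense_if_interpolating)
      (rule convex_unbounded_functionals_interpolate_finite[OF convex_convex_hull nonempty unbounded])
  then show ?thesis
    by auto
qed

end
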